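(* Let $q$ be odd and $u\in\mathbf{SL}_n(q)$ unipotent. Assume either (a) $n=4$ and $u$ has type $(2,2)$, or (b) $n=3$ and $u$ has type $(2,1)$. Then the conjugacy class $\mathcal{O}_u$ in $\mathbf{SL}_n(q)$ is of type D.
   Context: Unipotent type = sizes of Jordan blocks. Conjugacy classes are racks with $x\triangleright y=xyx^{-1}$. A subrack $Y$ is decomposable if $Y=R\sqcup S$ with nonempty subracks $R,S$, $Y\triangleright R=R$, $Y\triangleright S=S$. Type D: a decomposable subrack $R\sqcup S$ with $r\in R,s\in S$ and $r\triangleright(s\triangleright(r\triangleright s))\neq s$. *)

theory Defs
  imports "Jordan_Normal_Form.Jordan_Normal_Form"
begin

definition SL_mat :: "nat \<Rightarrow> 'a :: field mat set" where
  "SL_mat n = {A \<in> carrier_mat n n. det A = 1}"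

definition mat_inv :: "'a :: field mat \<Rightarrow> 'a mat" where
  "mat_inv A = (SOME B. B \<in> carrier_mat (dim_row A) (dim_row A)
                   \<and> inverts_mat A B \<and> inverts_mat B A)"

definition rack_op :: "'a :: field mat \<Rightarrow> 'a mat \<Rightarrow> 'a mat" where
  "rack_op x y = x * y * mat_inv x"

definition conj_class_SL :: "nat \<Rightarrow> 'a :: field mat \<Rightarrow> 'a mat set" where
  "conj_class_SL n u = {rack_op g u | g. g \<in> SL_mat n}"

definition subrack :: "'a :: field mat set \<Rightarrow> 'a mat set \<Rightarrow> bool" where
  "subrack Y X \<longleftrightarrow> Y \<subseteq> X \<and> (\<forall>x\<in>Y. \<forall>y\<in>Y. rack_op x y \<in> Y)"

definition rack_act_set :: "'a :: field mat set \<Rightarrow> 'a mat set \<Rightarrow> 'a mat set" where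
  "rack_act_set Y R = {rack_op y r | y r. y \<in> Y \<and> r \<in> R}"

definition decomposition :: "'a :: field mat set \<Rightarrow> 'a mat set \<Rightarrow> 'a mat set \<Rightarrow> bool" where
  "decomposition Y R S \<longleftrightarrow> Y = R \<union> S \<and> R \<inter> S = {} \<and> R \<noteq> {} \<and> S \<noteq> {}
     \<and> subrack R Y \<and> subrack S Y
     \<and> rack_act_set Y R = R \<and> rack_act_set Y S = S"

definition rack_type_D :: "'a :: field mat set \<Rightarrow> bool" where
  "rack_type_D X \<longleftrightarrow> (\<exists>Y R S. subrack Y X \<and> decomposition Y R S \<and>
     (\<exists>r\<in>R. \<exists>s\<in>S. rack_op r (rack_op s (rack_op r s)) \<noteq> s))"

end

theory Submission
  imports Defs "HOL-Number_Theory.Residues"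
begin

(*
  Up to a change of basis u is its Jordan form J, which lies in the group U of upper unitriangular
  matrices. The superdiagonal is a homomorphism from U to the additive group, so conjugation inside
  U does not change it. Hence for any s in the class of J that lies in U and has another
  superdiagonal than J, the elements of the class inside U whose superdiagonal is that of J or that
  of s form a subrack, decomposed by the value of the superdiagonal. It remains to find such an s
  with J |> (s |> (J |> s)) \<noteq> s; explicit matrices do it, the inequality amounting to 2 \<noteq> 0,
  which holds because the field has odd order.
*)

lemma two_neq_zero_if_odd_card:
  assumes "odd (card (UNIV :: 'a :: field set))"
  shows "(2::'a) \<noteq> 0"
proof
  assume "(2::'a) = 0"
  then have "CHAR('a) dvd 2" by (metis of_nat_eq_0_iff_char_dvd of_nat_numeral)
  moreover have "CHAR('a) \<noteq> 1" by simp
  ultimately have "CHAR('a) = 2"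
    using dvd_imp_le[of "CHAR('a)" 2] by (cases "CHAR('a)") (auto simp: less_Suc_eq_le le_Suc_eq)
  then show False using CHAR_dvd_CARD[where 'a='a] assms by simp
qed

lemma mult_mat_cancel_left:
  fixes x y Z :: "'a :: semiring_1 mat"
  assumes "x \<in> carrier_mat n n" "y \<in> carrier_mat n n" "Z \<in> carrier_mat n n" "x * y = 1\<^sub>m n"
  shows "x * (y * Z) = Z"
proof -
  have "x * (y * Z) = (x * y) * Z" by (rule assoc_mult_mat[OF assms(1-3), symmetric])
  also have "\<dots> = Z" by (simp add: assms(4) left_mult_one_mat[OF assms(3)])
  finally show ?thesis .
qed

(* The library's assoc_mult_mat leaves the inner dimensions to be guessed, which the simplifier
   cannot do; these versions fix every dimension to n. *)
lemmas square_mat_mult_simps =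
  assoc_mult_mat[of _ n n _ n _ n] mult_carrier_mat[of _ n n _ n] mult_mat_cancel_left[where n=n]
  for n

lemma mat_inv_eqI:
  assumes A: "A \<in> carrier_mat n n" and B: "B \<in> carrier_mat n n"
    and AB: "A * B = 1\<^sub>m n" and BA: "B * A = 1\<^sub>m n"
  shows "mat_inv A = B"
proof -
  have "\<exists>B. B \<in> carrier_mat (dim_row A) (dim_row A) \<and> inverts_mat A B \<and> inverts_mat B A"
    using A B AB BA by (auto simp: inverts_mat_def)
  then have inv: "mat_inv A \<in> carrier_mat n n" "mat_inv A * A = 1\<^sub>m n"
    unfolding mat_inv_def using A by (auto dest!: someI_ex simp: inverts_mat_def)
  have "mat_inv A = mat_inv A * (A * B)" using inv AB by simp
  also have "\<dots> = B" using inv A B by (simp flip: assoc_mult_mat add: BA)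
  finally show ?thesis .
qed

lemma SL_mat_carrier: "A \<in> SL_mat n \<Longrightarrow> A \<in> carrier_mat n n"
  by (simp add: SL_mat_def)

lemma SL_mat_inverse:
  assumes "A \<in> SL_mat n"
  shows "mat_inv A \<in> carrier_mat n n" "A * mat_inv A = 1\<^sub>m n" "mat_inv A * A = 1\<^sub>m n"
proof -
  have A: "A \<in> carrier_mat n n" "det A = 1" using assms by (auto simp: SL_mat_def)
  then have "A \<in> Units (ring_mat TYPE('a) n ())" by (simp add: det_non_zero_imp_unit)
  then obtain B where B: "B \<in> carrier_mat n n" "B * A = 1\<^sub>m n" "A * B = 1\<^sub>m n"
    unfolding Units_def ring_mat_def by auto
  then have "mat_inv A = B" using A by (intro mat_inv_eqI) auto
  then show "mat_inv A \<in> carrier_mat n n" "A * mat_inv A = 1\<^sub>m n" "mat_inv A * A = 1\<^sub>m n"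
    using B by auto
qed

lemma SL_mat_mult: "A \<in> SL_mat n \<Longrightarrow> B \<in> SL_mat n \<Longrightarrow> A * B \<in> SL_mat n"
  by (auto simp: SL_mat_def det_mult)

lemma SL_mat_basis_change:
  assumes "x \<in> SL_mat n" "P \<in> carrier_mat n n" "Q \<in> carrier_mat n n" "P * Q = 1\<^sub>m n"
  shows "P * x * Q \<in> SL_mat n"
proof -
  have x: "x \<in> carrier_mat n n" "det x = 1" using assms(1) by (auto simp: SL_mat_def)
  have "det P * det Q = 1" using det_mult[OF assms(2,3)] assms(4) by simp
  moreover have "det (P * x * Q) = det x * (det P * det Q)"
    using det_mult[OF assms(2) x(1)] det_mult[of "P * x" n Q] assms(2,3) x by simp
  ultimately show ?thesis using x assms(2,3) by (simp add: SL_mat_def)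
qed

lemma basis_change_cancel:
  fixes x P Q :: "'a :: semiring_1 mat"
  assumes "x \<in> carrier_mat n n" "P \<in> carrier_mat n n" "Q \<in> carrier_mat n n" "Q * P = 1\<^sub>m n"
  shows "Q * (P * x * Q) * P = x"
  using assms
  by (simp del: assoc_mult_mat add: square_mat_mult_simps[where n=n] right_mult_one_mat[OF assms(1)])

lemma rack_op_eqI:
  assumes g: "g \<in> SL_mat n" and xy: "x \<in> carrier_mat n n" "y \<in> carrier_mat n n"
    and comm: "g * x = y * g"
  shows "rack_op g x = y"
proof -
  note inv = SL_mat_inverse[OF g] and gc = SL_mat_carrier[OF g]
  have "rack_op g x = y * (g * mat_inv g)"
    unfolding rack_op_def comm using inv gc xy by simp
  then show ?thesis using inv xy by simp
qed

lemma rack_op_self: "x \<in> SL_mat n \<Longrightarrow> rack_op x x = x"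
  by (rule rack_op_eqI) (auto simp: SL_mat_carrier)

lemma rack_op_mult:
  assumes g: "g \<in> SL_mat n" and h: "h \<in> SL_mat n" and v: "v \<in> carrier_mat n n"
  shows "rack_op g (rack_op h v) = rack_op (g * h) v"
proof -
  note ig = SL_mat_inverse[OF g] and ih = SL_mat_inverse[OF h]
  note gc = SL_mat_carrier[OF g] and hc = SL_mat_carrier[OF h]
  have c: "rack_op g (rack_op h v) \<in> carrier_mat n n"
    using ig ih gc hc v unfolding rack_op_def by (meson mult_carrier_mat)
  have "(g * h) * v = rack_op g (rack_op h v) * (g * h)"
    unfolding rack_op_def using ig ih gc hc v
    by (simp del: assoc_mult_mat add: square_mat_mult_simps[where n=n])
  from rack_op_eqI[OF SL_mat_mult[OF g h] v c this] show ?thesis by (rule sym)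
qed

lemma rack_op_basis_change:
  assumes x: "x \<in> SL_mat n" and y: "y \<in> carrier_mat n n"
    and P: "P \<in> carrier_mat n n" and Q: "Q \<in> carrier_mat n n"
    and PQ: "P * Q = 1\<^sub>m n" and QP: "Q * P = 1\<^sub>m n"
  shows "rack_op (P * x * Q) (P * y * Q) = P * rack_op x y * Q"
proof (rule rack_op_eqI)
  note ix = SL_mat_inverse[OF x] and xc = SL_mat_carrier[OF x]
  show "P * x * Q \<in> SL_mat n" by (rule SL_mat_basis_change[OF x P Q PQ])
  show "P * y * Q \<in> carrier_mat n n" "P * rack_op x y * Q \<in> carrier_mat n n"
    using P Q xc y ix by (auto simp: rack_op_def)
  show "P * x * Q * (P * y * Q) = P * rack_op x y * Q * (P * x * Q)"
    unfolding rack_op_def using P Q QP xc y ix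
    by (simp del: assoc_mult_mat add: square_mat_mult_simps[where n=n])
qed

lemma conj_class_SL_subset_SL:
  assumes "v \<in> SL_mat n"
  shows "conj_class_SL n v \<subseteq> SL_mat n"
proof
  fix c assume "c \<in> conj_class_SL n v"
  then obtain g where g: "g \<in> SL_mat n" and c: "c = g * v * mat_inv g"
    unfolding conj_class_SL_def rack_op_def by blast
  show "c \<in> SL_mat n"
    unfolding c
    by (rule SL_mat_basis_change[OF assms SL_mat_carrier[OF g] SL_mat_inverse(1,2)[OF g]])
qed

lemma self_mem_conj_class_SL:
  assumes "v \<in> carrier_mat n n"
  shows "v \<in> conj_class_SL n v"
proof -
  have "1\<^sub>m n \<in> SL_mat n" by (simp add: SL_mat_def)
  moreover from this have "rack_op (1\<^sub>m n) v = v" using assms by (intro rack_op_eqI) auto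
  ultimately show ?thesis unfolding conj_class_SL_def by force
qed

lemma conj_class_SL_memI:
  assumes "g \<in> SL_mat n" "v \<in> carrier_mat n n" "w \<in> carrier_mat n n" "g * v = w * g"
  shows "w \<in> conj_class_SL n v"
  using rack_op_eqI[OF assms] assms(1) unfolding conj_class_SL_def by blast

lemma rack_op_mem_conj_class_SL:
  assumes "v \<in> carrier_mat n n" "g \<in> SL_mat n" "c \<in> conj_class_SL n v"
  shows "rack_op g c \<in> conj_class_SL n v"
proof -
  obtain h where h: "h \<in> SL_mat n" and c: "c = rack_op h v"
    using assms(3) unfolding conj_class_SL_def by blast
  have "rack_op g c = rack_op (g * h) v"
    unfolding c using assms(2) h assms(1) by (rule rack_op_mult)
  then show ?thesis using SL_mat_mult[OF assms(2) h] unfolding conj_class_SL_def by blast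
qed

lemma conj_class_SL_basis_change:
  assumes v: "v \<in> carrier_mat n n" and P: "P \<in> carrier_mat n n" and Q: "Q \<in> carrier_mat n n"
    and PQ: "P * Q = 1\<^sub>m n" and QP: "Q * P = 1\<^sub>m n"
  shows "conj_class_SL n (P * v * Q) = (\<lambda>x. P * x * Q) ` conj_class_SL n v"
proof
  show "conj_class_SL n (P * v * Q) \<subseteq> (\<lambda>x. P * x * Q) ` conj_class_SL n v"
  proof
    fix c assume "c \<in> conj_class_SL n (P * v * Q)"
    then obtain g where g: "g \<in> SL_mat n" and c: "c = rack_op g (P * v * Q)"
      unfolding conj_class_SL_def by blast
    have "g = P * (Q * g * P) * Q"
      using basis_change_cancel[OF SL_mat_carrier[OF g] Q P PQ] by simp
    then have "c = P * rack_op (Q * g * P) v * Q"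
      using c rack_op_basis_change[OF SL_mat_basis_change[OF g Q P QP] v P Q PQ QP] by simp
    moreover have "rack_op (Q * g * P) v \<in> conj_class_SL n v"
      using SL_mat_basis_change[OF g Q P QP] unfolding conj_class_SL_def by blast
    ultimately show "c \<in> (\<lambda>x. P * x * Q) ` conj_class_SL n v" by blast
  qed
  show "(\<lambda>x. P * x * Q) ` conj_class_SL n v \<subseteq> conj_class_SL n (P * v * Q)"
  proof
    fix c assume "c \<in> (\<lambda>x. P * x * Q) ` conj_class_SL n v"
    then obtain h where h: "h \<in> SL_mat n" and c: "c = P * rack_op h v * Q"
      unfolding conj_class_SL_def by blast
    then have "c = rack_op (P * h * Q) (P * v * Q)"
      using rack_op_basis_change[OF h v P Q PQ QP] by simp
    then show "c \<in> conj_class_SL n (P * v * Q)"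
      using SL_mat_basis_change[OF h P Q PQ] unfolding conj_class_SL_def by blast
  qed
qed

lemma rack_act_set_image:
  assumes hom: "\<And>x y. x \<in> X \<Longrightarrow> y \<in> X \<Longrightarrow> \<phi> (rack_op x y) = rack_op (\<phi> x) (\<phi> y)"
    and "Y \<subseteq> X" "A \<subseteq> X"
  shows "rack_act_set (\<phi> ` Y) (\<phi> ` A) = \<phi> ` rack_act_set Y A"
proof -
  have "rack_act_set (\<phi> ` Y) (\<phi> ` A) = (\<lambda>(y, a). rack_op (\<phi> y) (\<phi> a)) ` (Y \<times> A)"
    unfolding rack_act_set_def by force
  also have "\<dots> = (\<lambda>(y, a). \<phi> (rack_op y a)) ` (Y \<times> A)"
    using assms(2,3) by (intro image_cong) (auto simp: hom subset_iff)
  also have "\<dots> = \<phi> ` rack_act_set Y A"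
    unfolding rack_act_set_def by force
  finally show ?thesis .
qed

lemma subrack_image:
  assumes hom: "\<And>x y. x \<in> X \<Longrightarrow> y \<in> X \<Longrightarrow> \<phi> (rack_op x y) = rack_op (\<phi> x) (\<phi> y)"
    and "subrack A B" "B \<subseteq> X"
  shows "subrack (\<phi> ` A) (\<phi> ` B)"
proof -
  have AB: "A \<subseteq> B" and closed: "\<And>x y. x \<in> A \<Longrightarrow> y \<in> A \<Longrightarrow> rack_op x y \<in> A"
    using assms(2) unfolding subrack_def by auto
  have "rack_op (\<phi> x) (\<phi> y) \<in> \<phi> ` A" if "x \<in> A" "y \<in> A" for x y
    using hom[of x y] closed[OF that] that AB assms(3) by (metis image_eqI subsetD)
  then show ?thesis using AB unfolding subrack_def by blast
qed

lemma rack_type_D_image: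
  assumes inj: "inj_on \<phi> X"
    and hom: "\<And>x y. x \<in> X \<Longrightarrow> y \<in> X \<Longrightarrow> \<phi> (rack_op x y) = rack_op (\<phi> x) (\<phi> y)"
    and "rack_type_D X"
  shows "rack_type_D (\<phi> ` X)"
proof -
  obtain Y R S r s where Y: "subrack Y X" and dec: "decomposition Y R S"
    and r: "r \<in> R" and s: "s \<in> S" and D: "rack_op r (rack_op s (rack_op r s)) \<noteq> s"
    using assms(3) unfolding rack_type_D_def by blast
  have YX: "Y \<subseteq> X" and RY: "R \<subseteq> Y" and SY: "S \<subseteq> Y"
    and Y_closed: "\<And>x y. x \<in> Y \<Longrightarrow> y \<in> Y \<Longrightarrow> rack_op x y \<in> Y"
    using Y dec unfolding subrack_def decomposition_def by auto
  have "decomposition (\<phi> ` Y) (\<phi> ` R) (\<phi> ` S)"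
    unfolding decomposition_def
  proof (intro conjI)
    show "\<phi> ` Y = \<phi> ` R \<union> \<phi> ` S" "\<phi> ` R \<noteq> {}" "\<phi> ` S \<noteq> {}"
      using dec unfolding decomposition_def by auto
    show "\<phi> ` R \<inter> \<phi> ` S = {}"
      using dec RY SY YX unfolding decomposition_def
      by (metis image_empty inj_on_image_Int[OF inj] subset_trans)
    have "subrack R Y" "subrack S Y" and act: "rack_act_set Y R = R" "rack_act_set Y S = S"
      using dec unfolding decomposition_def by auto
    then show "subrack (\<phi> ` R) (\<phi> ` Y)" "subrack (\<phi> ` S) (\<phi> ` Y)"
      by (simp_all add: subrack_image[OF hom _ YX])
    show "rack_act_set (\<phi> ` Y) (\<phi> ` R) = \<phi> ` R" "rack_act_set (\<phi> ` Y) (\<phi> ` S) = \<phi> ` S"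
      using rack_act_set_image[OF hom YX] RY SY YX act by (simp_all add: subset_trans)
  qed
  moreover
  have rs: "r \<in> Y" "s \<in> Y" using r s RY SY by auto
  then have "rack_op r s \<in> Y" "rack_op s (rack_op r s) \<in> Y"
    "rack_op r (rack_op s (rack_op r s)) \<in> Y"
    using Y_closed by blast+
  then have "rack_op (\<phi> r) (rack_op (\<phi> s) (rack_op (\<phi> r) (\<phi> s))) \<noteq> \<phi> s"
    using D rs YX inj_onD[OF inj] by (auto simp: hom subset_iff)
  moreover have "subrack (\<phi> ` Y) (\<phi> ` X)" "\<phi> r \<in> \<phi> ` R" "\<phi> s \<in> \<phi> ` S"
    using subrack_image[OF hom Y] r s by auto
  ultimately show ?thesis
    unfolding rack_type_D_def by blast
qed

lemma rack_type_D_conj_class_SL_similar: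
  assumes u: "u \<in> SL_mat n" and sim: "similar_mat u v" and D: "rack_type_D (conj_class_SL n v)"
  shows "rack_type_D (conj_class_SL n u)"
proof -
  obtain m P Q where car: "{u, v, P, Q} \<subseteq> carrier_mat m m"
    and PQ: "P * Q = 1\<^sub>m m" and QP: "Q * P = 1\<^sub>m m" and u_eq: "u = P * v * Q"
    using similar_matD[OF sim] by blast
  have "m = n" using car SL_mat_carrier[OF u] by auto
  then have vc: "v \<in> carrier_mat n n" and P: "P \<in> carrier_mat n n" and Q: "Q \<in> carrier_mat n n"
    and PQ: "P * Q = 1\<^sub>m n" and QP: "Q * P = 1\<^sub>m n"
    using car PQ QP by auto
  have "v \<in> SL_mat n" using u vc det_similar[OF sim] by (simp add: SL_mat_def)
  then have class_SL: "conj_class_SL n v \<subseteq> SL_mat n" by (rule conj_class_SL_subset_SL)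
  have "inj_on (\<lambda>x. P * x * Q) (conj_class_SL n v)"
  proof (rule inj_onI)
    fix x y assume "x \<in> conj_class_SL n v" "y \<in> conj_class_SL n v" "P * x * Q = P * y * Q"
    then show "x = y"
      using class_SL basis_change_cancel[OF _ P Q QP] SL_mat_carrier by (metis subsetD)
  qed
  moreover have "P * rack_op x y * Q = rack_op (P * x * Q) (P * y * Q)"
    if "x \<in> conj_class_SL n v" "y \<in> conj_class_SL n v" for x y
    using that class_SL rack_op_basis_change[OF _ _ P Q PQ QP] SL_mat_carrier by (metis subsetD)
  ultimately show ?thesis
    unfolding u_eq conj_class_SL_basis_change[OF vc P Q PQ QP] using D by (rule rack_type_D_image)
qed

lemma rack_type_D_if_invariant_separates:
  fixes C H :: "'a :: field mat set" and f :: "'a mat \<Rightarrow> 'b"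
  assumes C_SL: "C \<subseteq> SL_mat n"
    and C_closed: "\<And>x y. x \<in> C \<Longrightarrow> y \<in> C \<Longrightarrow> rack_op x y \<in> C"
    and H_closed: "\<And>x y. x \<in> H \<Longrightarrow> y \<in> H \<Longrightarrow> rack_op x y \<in> H"
    and f_invariant: "\<And>x y. x \<in> H \<Longrightarrow> y \<in> H \<Longrightarrow> f (rack_op x y) = f y"
    and r: "r \<in> C \<inter> H" and s: "s \<in> C \<inter> H" and f_rs: "f r \<noteq> f s"
    and D: "rack_op r (rack_op s (rack_op r s)) \<noteq> s"
  shows "rack_type_D C"
proof -
  define fibre where "fibre a = {y \<in> C \<inter> H. f y = a}" for a
  define Y where "Y = fibre (f r) \<union> fibre (f s)"
  have fibre_closed: "rack_op x y \<in> fibre a" if "x \<in> C \<inter> H" "y \<in> fibre a" for x y a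
    using that C_closed H_closed f_invariant unfolding fibre_def by auto
  have Y_sub: "Y \<subseteq> C \<inter> H" unfolding Y_def fibre_def by auto
  have subrack_fibre: "subrack (fibre (f x)) Y" if "x \<in> {r, s}" for x
    using that fibre_closed unfolding subrack_def Y_def fibre_def by auto
  have act_fibre: "rack_act_set Y (fibre (f x)) = fibre (f x)" if "x \<in> {r, s}" for x
  proof
    show "rack_act_set Y (fibre (f x)) \<subseteq> fibre (f x)"
      using Y_sub fibre_closed unfolding rack_act_set_def by blast
    show "fibre (f x) \<subseteq> rack_act_set Y (fibre (f x))"
    proof
      fix y assume y: "y \<in> fibre (f x)"
      then have "rack_op y y = y" using C_SL rack_op_self unfolding fibre_def by blast
      moreover have "y \<in> Y" using that y unfolding Y_def by auto
      ultimately show "y \<in> rack_act_set Y (fibre (f x))"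
        using y unfolding rack_act_set_def by (metis (mono_tags, lifting) mem_Collect_eq)
    qed
  qed
  have "decomposition Y (fibre (f r)) (fibre (f s))"
    unfolding decomposition_def
    using f_rs r s subrack_fibre act_fibre by (auto simp: Y_def fibre_def)
  moreover have "subrack Y C"
    unfolding subrack_def
  proof (intro conjI ballI)
    show "Y \<subseteq> C" using Y_sub by auto
    fix x y assume "x \<in> Y" "y \<in> Y"
    then show "rack_op x y \<in> Y" using Y_sub fibre_closed unfolding Y_def by blast
  qed
  moreover have "r \<in> fibre (f r)" "s \<in> fibre (f s)" using r s unfolding fibre_def by auto
  ultimately show ?thesis using D unfolding rack_type_D_def by blast
qed

definition unitriangular :: "nat \<Rightarrow> 'a :: semiring_1 mat set" where
  "unitriangular n =
    {A \<in> carrier_mat n n. \<forall>i<n. A $$ (i, i) = 1 \<and> (\<forall>j<i. A $$ (i, j) = 0)}"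

(* In fact every unitriangular matrix has a unitriangular inverse; here the inverse is part of the
   data. *)
definition unitriangular_units :: "nat \<Rightarrow> 'a :: semiring_1 mat set" where
  "unitriangular_units n =
    {A \<in> unitriangular n. \<exists>B \<in> unitriangular n. A * B = 1\<^sub>m n \<and> B * A = 1\<^sub>m n}"

definition superdiag :: "nat \<Rightarrow> 'a :: zero mat \<Rightarrow> nat \<Rightarrow> 'a" where
  "superdiag n A i = (if Suc i < n then A $$ (i, Suc i) else 0)"

lemma unitriangular_mult_index:
  assumes A: "A \<in> unitriangular n" and B: "B \<in> unitriangular n" and ij: "i < n" "j < n"
  shows "(A * B) $$ (i, j) = (\<Sum>k = i..j. A $$ (i, k) * B $$ (k, j))"
proof -
  have "(A * B) $$ (i, j) = (\<Sum>k \<in> {0..<n}. A $$ (i, k) * B $$ (k, j))"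
    using assms by (auto simp: unitriangular_def scalar_prod_def)
  also have "\<dots> = (\<Sum>k = i..j. A $$ (i, k) * B $$ (k, j))"
  proof (rule sum.mono_neutral_right)
    show "\<forall>k \<in> {0..<n} - {i..j}. A $$ (i, k) * B $$ (k, j) = 0"
      using assms unfolding unitriangular_def by (auto simp: not_le)
  qed (use ij in auto)
  finally show ?thesis .
qed

lemma unitriangular_mult:
  assumes "A \<in> unitriangular n" "B \<in> unitriangular n"
  shows "A * B \<in> unitriangular n"
  using assms unitriangular_mult_index[OF assms]
  by (auto simp: unitriangular_def)

lemma superdiag_mult:
  assumes "A \<in> unitriangular n" "B \<in> unitriangular n"
  shows "superdiag n (A * B) i = superdiag n A i + superdiag n B i"
proof (cases "Suc i < n")
  case True
  then have "{i..Suc i} = {i, Suc i}" by auto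
  with True show ?thesis
    using assms unitriangular_mult_index[OF assms, of i "Suc i"]
    by (auto simp: superdiag_def unitriangular_def add.commute)
qed (simp add: superdiag_def)

lemma unitriangular_SL:
  assumes "A \<in> unitriangular n"
  shows "A \<in> SL_mat n"
proof -
  have A: "A \<in> carrier_mat n n" "upper_triangular A"
    using assms by (auto simp: unitriangular_def upper_triangular_def)
  have "det A = (\<Prod>i = 0..<n. A $$ (i, i))"
    using A by (simp add: det_upper_triangular prod_list_diag_prod)
  also have "\<dots> = 1" using assms by (auto simp: unitriangular_def intro!: prod.neutral)
  finally show ?thesis using A by (simp add: SL_mat_def)
qed

lemma transpose_unitriangular_SL:
  assumes "transpose_mat A \<in> unitriangular n"
  shows "A \<in> SL_mat n"
proof -
  have A: "A \<in> carrier_mat n n" using assms by (auto simp: unitriangular_def)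
  then show ?thesis
    using unitriangular_SL[OF assms] det_transpose[OF A] by (simp add: SL_mat_def)
qed

lemma unitriangular_units_rack_op:
  fixes x y :: "'a :: field mat"
  assumes x: "x \<in> unitriangular_units n" and y: "y \<in> unitriangular_units n"
  shows "rack_op x y \<in> unitriangular_units n" "superdiag n (rack_op x y) = superdiag n y"
proof -
  obtain x' where x': "x' \<in> unitriangular n" "x * x' = 1\<^sub>m n" "x' * x = 1\<^sub>m n"
    and xU: "x \<in> unitriangular n" using x unfolding unitriangular_units_def by blast
  obtain y' where y': "y' \<in> unitriangular n" "y * y' = 1\<^sub>m n" "y' * y = 1\<^sub>m n"
    and yU: "y \<in> unitriangular n" using y unfolding unitriangular_units_def by blast
  have car: "x \<in> carrier_mat n n" "x' \<in> carrier_mat n n"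
    "y \<in> carrier_mat n n" "y' \<in> carrier_mat n n"
    using xU x' yU y' by (auto simp: unitriangular_def)
  have "mat_inv x = x'" using car x' by (intro mat_inv_eqI) auto
  then have xyx': "rack_op x y = x * y * x'" unfolding rack_op_def by simp
  have "x * y * x' * (x * y' * x') = 1\<^sub>m n" "x * y' * x' * (x * y * x') = 1\<^sub>m n"
    using car x' y'
    by (simp_all del: assoc_mult_mat add: square_mat_mult_simps[where n=n])
  then show "rack_op x y \<in> unitriangular_units n"
    unfolding xyx' unitriangular_units_def using xU yU x' y' by (blast intro: unitriangular_mult)
  show "superdiag n (rack_op x y) = superdiag n y"
  proof
    fix i
    have "superdiag n x i + superdiag n x' i = superdiag n (1\<^sub>m n) i"
      using superdiag_mult[OF xU x'(1)] x'(2) by simp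
    also have "\<dots> = 0" by (simp add: superdiag_def)
    finally show "superdiag n (rack_op x y) i = superdiag n y i"
      unfolding xyx' using xU yU x'(1)
      by (simp add: superdiag_mult unitriangular_mult algebra_simps)
  qed
qed

lemma rack_type_D_conj_class_SL_unitriangular:
  fixes r s :: "'a :: field mat"
  assumes r: "r \<in> unitriangular_units n" and s: "s \<in> unitriangular_units n"
    and s_conj: "s \<in> conj_class_SL n r"
    and superdiag_rs: "superdiag n r \<noteq> superdiag n s"
    and D: "rack_op r (rack_op s (rack_op r s)) \<noteq> s"
  shows "rack_type_D (conj_class_SL n r)"
proof -
  have "r \<in> SL_mat n" using r unitriangular_SL unfolding unitriangular_units_def by blast
  then have class_SL: "conj_class_SL n r \<subseteq> SL_mat n" and r_class: "r \<in> conj_class_SL n r"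
    by (simp_all add: conj_class_SL_subset_SL self_mem_conj_class_SL SL_mat_carrier)
  have closed: "rack_op x y \<in> conj_class_SL n r"
    if "x \<in> conj_class_SL n r" "y \<in> conj_class_SL n r" for x y
    using that class_SL r_class rack_op_mem_conj_class_SL SL_mat_carrier by blast
  have "r \<in> conj_class_SL n r \<inter> unitriangular_units n"
    "s \<in> conj_class_SL n r \<inter> unitriangular_units n"
    using r r_class s s_conj by blast+
  from rack_type_D_if_invariant_separates[OF class_SL closed
      unitriangular_units_rack_op(1) unitriangular_units_rack_op(2) this superdiag_rs D]
  show ?thesis .
qed

lemma rack_type_D_conj_class_jordan_2_1:
  assumes two: "(2::'a::field) \<noteq> 0"
  shows "rack_type_D (conj_class_SL 3 (jordan_matrix [(2, 1), (1, 1 :: 'a)]))"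
proof -
  define J :: "'a mat" where
    "J = mat_of_rows_list 3 [[1, 1, 0], [0, 1, 0], [0, 0, 1]]"
  define J' :: "'a mat" where
    "J' = mat_of_rows_list 3 [[1, -1, 0], [0, 1, 0], [0, 0, 1]]"
  define S :: "'a mat" where
    "S = mat_of_rows_list 3 [[1, 0, 1], [0, 1, 1], [0, 0, 1]]"
  define S' :: "'a mat" where
    "S' = mat_of_rows_list 3 [[1, 0, -1], [0, 1, -1], [0, 0, 1]]"
  \<comment> \<open>The conjugator is L * U, visibly of determinant 1.\<close>
  define L :: "'a mat" where
    "L = mat_of_rows_list 3 [[1, 0, 0], [1, 1, 0], [0, 1, 1]]"
  define U :: "'a mat" where
    "U = mat_of_rows_list 3 [[1, 0, 1], [0, 1, -1], [0, 0, 1]]"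
  define T :: "'a mat" where
    "T = mat_of_rows_list 3 [[1, 0, 2], [0, 1, 1], [0, 0, 1]]"
  define T' :: "'a mat" where
    "T' = mat_of_rows_list 3 [[1, 0, 3], [0, 1, 1], [0, 0, 1]]"
  note defs = J_def J'_def S_def S'_def L_def U_def T_def T'_def
  have car: "J \<in> carrier_mat 3 3" "S \<in> carrier_mat 3 3" "T \<in> carrier_mat 3 3"
    "T' \<in> carrier_mat 3 3"
    by (auto simp: defs mat_of_rows_list_def)
  have jordan: "jordan_matrix [(2, 1), (1, 1 :: 'a)] = J"
    by (rule eq_matI) (auto simp: J_def mat_of_rows_list_def jordan_matrix_def Let_def
        less_Suc_eq eval_nat_numeral)
  have UT: "J \<in> unitriangular 3" "J' \<in> unitriangular 3" "S \<in> unitriangular 3"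
    "S' \<in> unitriangular 3" "U \<in> unitriangular 3" "transpose_mat L \<in> unitriangular 3"
    by (auto simp: unitriangular_def defs mat_of_rows_list_def eval_nat_numeral less_Suc_eq)
  have prods: "J * J' = 1\<^sub>m 3" "J' * J = 1\<^sub>m 3" "S * S' = 1\<^sub>m 3" "S' * S = 1\<^sub>m 3"
    "L * U * J = S * (L * U)" "J * S = T * J" "S * T = T * S" "J * T = T' * J"
    by (rule eq_matI; auto simp: defs mat_of_rows_list_def scalar_prod_def eval_nat_numeral
        less_Suc_eq sum.atLeast0_lessThan_Suc)+
  have units: "J \<in> unitriangular_units 3" "S \<in> unitriangular_units 3"
    using UT prods unfolding unitriangular_units_def by blast+
  have SL: "J \<in> SL_mat 3" "S \<in> SL_mat 3" "L * U \<in> SL_mat 3"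
    using UT by (simp_all add: unitriangular_SL SL_mat_mult transpose_unitriangular_SL)
  have "S \<in> conj_class_SL 3 J"
    using SL car prods by (intro conj_class_SL_memI[of "L * U"]) auto
  moreover have "rack_op J (rack_op S (rack_op J S)) = T'"
    using SL car prods by (simp add: rack_op_eqI)
  moreover have "T' \<noteq> S"
  proof
    assume "T' = S"
    then have "T' $$ (0, 2) = S $$ (0, 2)" by simp
    then have "(2::'a) + 1 = 0 + 1" by (simp add: defs mat_of_rows_list_def)
    then have "(2::'a) = 0" by (rule add_right_imp_eq)
    with two show False ..
  qed
  moreover have "superdiag 3 J 0 \<noteq> superdiag 3 S 0"
    by (simp add: superdiag_def defs mat_of_rows_list_def)
  ultimately show ?thesis
    unfolding jordan using units by (intro rack_type_D_conj_class_SL_unitriangular) auto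
qed

lemma rack_type_D_conj_class_jordan_2_2:
  assumes two: "(2::'a::field) \<noteq> 0"
  shows "rack_type_D (conj_class_SL 4 (jordan_matrix [(2, 1), (2, 1 :: 'a)]))"
proof -
  define J :: "'a mat" where
    "J = mat_of_rows_list 4 [[1, 1, 0, 0], [0, 1, 0, 0], [0, 0, 1, 1], [0, 0, 0, 1]]"
  define J' :: "'a mat" where
    "J' = mat_of_rows_list 4 [[1, -1, 0, 0], [0, 1, 0, 0], [0, 0, 1, -1], [0, 0, 0, 1]]"
  define S :: "'a mat" where
    "S = mat_of_rows_list 4 [[1, 0, -1, 0], [0, 1, 0, 1], [0, 0, 1, 0], [0, 0, 0, 1]]"
  define S' :: "'a mat" where
    "S' = mat_of_rows_list 4 [[1, 0, 1, 0], [0, 1, 0, -1], [0, 0, 1, 0], [0, 0, 0, 1]]"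
  define L :: "'a mat" where
    "L = mat_of_rows_list 4 [[1, 0, 0, 0], [0, 1, 0, 0], [0, -1, 1, 0], [0, 0, 0, 1]]"
  define U :: "'a mat" where
    "U = mat_of_rows_list 4 [[1, 0, 0, 0], [0, 1, 1, 0], [0, 0, 1, 0], [0, 0, 0, 1]]"
  define T :: "'a mat" where
    "T = mat_of_rows_list 4 [[1, 0, -1, 2], [0, 1, 0, 1], [0, 0, 1, 0], [0, 0, 0, 1]]"
  define T' :: "'a mat" where
    "T' = mat_of_rows_list 4 [[1, 0, -1, 4], [0, 1, 0, 1], [0, 0, 1, 0], [0, 0, 0, 1]]"
  note defs = J_def J'_def S_def S'_def L_def U_def T_def T'_def
  have car: "J \<in> carrier_mat 4 4" "S \<in> carrier_mat 4 4" "T \<in> carrier_mat 4 4"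
    "T' \<in> carrier_mat 4 4"
    by (auto simp: defs mat_of_rows_list_def)
  have jordan: "jordan_matrix [(2, 1), (2, 1 :: 'a)] = J"
    by (rule eq_matI) (auto simp: J_def mat_of_rows_list_def jordan_matrix_def Let_def
        less_Suc_eq eval_nat_numeral)
  have UT: "J \<in> unitriangular 4" "J' \<in> unitriangular 4" "S \<in> unitriangular 4"
    "S' \<in> unitriangular 4" "U \<in> unitriangular 4" "transpose_mat L \<in> unitriangular 4"
    by (auto simp: unitriangular_def defs mat_of_rows_list_def eval_nat_numeral less_Suc_eq)
  have prods: "J * J' = 1\<^sub>m 4" "J' * J = 1\<^sub>m 4" "S * S' = 1\<^sub>m 4" "S' * S = 1\<^sub>m 4"
    "L * U * J = S * (L * U)" "J * S = T * J" "S * T = T * S" "J * T = T' * J"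
    by (rule eq_matI; auto simp: defs mat_of_rows_list_def scalar_prod_def eval_nat_numeral
        less_Suc_eq sum.atLeast0_lessThan_Suc)+
  have units: "J \<in> unitriangular_units 4" "S \<in> unitriangular_units 4"
    using UT prods unfolding unitriangular_units_def by blast+
  have SL: "J \<in> SL_mat 4" "S \<in> SL_mat 4" "L * U \<in> SL_mat 4"
    using UT by (simp_all add: unitriangular_SL SL_mat_mult transpose_unitriangular_SL)
  have "S \<in> conj_class_SL 4 J"
    using SL car prods by (intro conj_class_SL_memI[of "L * U"]) auto
  moreover have "rack_op J (rack_op S (rack_op J S)) = T'"
    using SL car prods by (simp add: rack_op_eqI)
  moreover have "T' \<noteq> S"
  proof
    assume "T' = S"
    then have "T' $$ (0, 3) = S $$ (0, 3)" by simp
    then have "(4::'a) = 0" by (simp add: defs mat_of_rows_list_def)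
    then have "(2::'a) * 2 = 0" by simp
    with two show False unfolding mult_eq_0_iff by blast
  qed
  moreover have "superdiag 4 J 0 \<noteq> superdiag 4 S 0"
    by (simp add: superdiag_def defs mat_of_rows_list_def)
  ultimately show ?thesis
    unfolding jordan using units by (intro rack_type_D_conj_class_SL_unitriangular) auto
qed

theorem mainTheorem10:
  fixes u :: "'a :: field mat" and n :: nat
  assumes "finite (UNIV :: 'a set)"
    and "odd (card (UNIV :: 'a set))"
    and "u \<in> SL_mat n"
    and "(n = 4 \<and> jordan_nf u [(2, 1), (2, 1)]) \<or> (n = 3 \<and> jordan_nf u [(2, 1), (1, 1)])"
  shows "rack_type_D (conj_class_SL n u)"
proof -
  have two: "(2::'a) \<noteq> 0" using assms(2) by (rule two_neq_zero_if_odd_card)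
  from assms(4) show ?thesis
  proof (elim disjE conjE)
    assume "n = 4" "jordan_nf u [(2, 1), (2, 1)]"
    then show ?thesis
      using rack_type_D_conj_class_SL_similar[OF assms(3)] rack_type_D_conj_class_jordan_2_2[OF two]
      unfolding jordan_nf_def by blast
  next
    assume "n = 3" "jordan_nf u [(2, 1), (1, 1)]"
    then show ?thesis
      using rack_type_D_conj_class_SL_similar[OF assms(3)] rack_type_D_conj_class_jordan_2_1[OF two]
      unfolding jordan_nf_def by blast
  qed
qed

end
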